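(* Fix $P>0$ and $s>0$. For each integer $n\ge 2$, define the probability density on $[-1,1]$ \[ f_{U|\mathcal{E}}(u)=\frac{1}{F_n}(1-u^2)^{(n-3)/2}\exp\big(n\sqrt{Ps}\,u\big)\,\mathbf{1}\{u\in[-1,1]\},\qquad F_n=\int_{-1}^1(1-u^2)^{(n-3)/2}\exp\big(n\sqrt{Ps}\,u\big)\,\mathrm{d}u, \] and define \[ L(P,s)=\frac{(2Ps)^2}{\sqrt{2\pi}}\cdot\sqrt{\frac{1+4Ps-\sqrt{1+4Ps}}{(\sqrt{1+4Ps}-1)^5}}. \] Then \[ \limsup_{n\to\infty}\frac{1}{\sqrt{n}}\sup_{u\in[-1,1]}f_{U|\mathcal{E}}(u)\le L(P,s). \]
   Context: Here $\exp$ denotes the natural exponential. (In the paper, $f_{U|\mathcal{E}}$ arises as the conditional density of $U=\cos\Psi$, where $\Psi$ is the angle of a standard Gaussian vector $\mathbf{Z}\in\mathbb{R}^n$ conditioned on $\|\mathbf{x}_0+\mathbf{Z}\|_2^2=ns$ with $\mathbf{x}_0=(\sqrt{nP},0,\dots,0)$; the lemma concerns only the explicit density above.) *)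

theory Defs
  imports "HOL-Analysis.Analysis"
begin

text \<open>Weight (1-u^2)^((n-3)/2), written as sqrt(1-u^2) to the integer power n-3
  (so that the value at u = +-1 for n = 3 is 1, as in ordinary mathematics).\<close>
definition wU :: "real \<Rightarrow> real \<Rightarrow> nat \<Rightarrow> real \<Rightarrow> real" where
  "wU P s n u = sqrt (1 - u\<^sup>2) powi (int n - 3) * exp (real n * sqrt (P * s) * u)"

definition FU :: "real \<Rightarrow> real \<Rightarrow> nat \<Rightarrow> real" where
  "FU P s n = integral {-1..1} (\<lambda>u. wU P s n u)"

definition fU :: "real \<Rightarrow> real \<Rightarrow> nat \<Rightarrow> real \<Rightarrow> real" where
  "fU P s n u = (if u \<in> {-1..1} then wU P s n u / FU P s n else 0)"

definition LPs :: "real \<Rightarrow> real \<Rightarrow> real" where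
  "LPs P s = (2 * P * s)\<^sup>2 / sqrt (2 * pi) *
     sqrt ((1 + 4 * P * s - sqrt (1 + 4 * P * s)) / (sqrt (1 + 4 * P * s) - 1) ^ 5)"

end

theory Submission
  imports Defs "HOL-Probability.Probability" "HOL-Real_Asymp.Real_Asymp"
begin

text \<open>For \<open>n \<ge> 4\<close> the weight is \<open>exp (n \<psi> u)\<close> with the concave exponent
  \<open>\<psi> u = r ln (1 - u\<^sup>2) / 2 + a u\<close>, where \<open>r = (n - 3) / n\<close> and \<open>a = sqrt (P s)\<close>; let \<open>c\<close> be its
  maximiser. Two applications of \<open>ln x \<le> x - 1\<close> show that the weight never exceeds its peak value
  \<open>W = exp (n \<psi> c)\<close>, and that on a window \<open>|u - c| \<le> \<delta>\<close> it dominates the Gaussian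
  \<open>W exp (- S\<^sup>2 (u - c)\<^sup>2 / 2)\<close>, where \<open>S\<^sup>2 = (n - 3) K\<close> and \<open>K\<close> bounds the curvature of \<open>\<psi>\<close> on the
  window. Integrating the Gaussian over the window bounds the normaliser from below, whence
  \<open>sup f \<le> S / \<integral>{-\<delta>S..\<delta>S} exp (- x\<^sup>2 / 2)\<close>. Taking \<open>\<delta> = n powr (-1/4)\<close>, the window shrinks
  while \<open>\<delta> S \<rightarrow> \<infinity>\<close>, so after division by \<open>sqrt n\<close> the bound tends to \<open>sqrt (K\<^sub>\<infinity> / (2 \<pi>))\<close> with
  \<open>K\<^sub>\<infinity> = (1 + 3 c\<^sup>2) / (1 - c\<^sup>2)\<^sup>2\<close> at \<open>r = 1\<close>. This is cruder than the exact curvature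
  \<open>(1 + c\<^sup>2) / (1 - c\<^sup>2)\<^sup>2\<close>, but still below \<open>L(P,s)\<close>.\<close>

definition gauss_mass :: "real \<Rightarrow> real" where
  "gauss_mass R = integral {-R..R} (\<lambda>x. exp (- x\<^sup>2 / 2))"

lemma gauss_mass_tendsto: "(gauss_mass \<longlongrightarrow> sqrt (2 * pi)) at_top"
proof -
  have integrable: "set_integrable lborel {-R..R} std_normal_density" for R
    unfolding set_integrable_def by (rule integrable_mult_indicator) auto
  have "integral {-R..R} std_normal_density = integral {-R..R} (\<lambda>x. exp (- x\<^sup>2 / 2) / sqrt (2 * pi))"
    for R by (rule integral_cong) (simp add: std_normal_density_def)
  then have eq: "gauss_mass R = sqrt (2 * pi) * (LINT x:{-R..R}|lborel. std_normal_density x)" for R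
    unfolding set_borel_integral_eq_integral(2)[OF integrable] by (simp add: gauss_mass_def)
  have "((\<lambda>R. LINT x:{-R..R}|lborel. std_normal_density x)
      \<longlongrightarrow> integral\<^sup>L lborel std_normal_density) at_top"
    unfolding set_lebesgue_integral_def
  proof (rule integral_dominated_convergence_at_top[where w = std_normal_density])
    show "AE x in lborel. ((\<lambda>R. indicator {-R..R} x *\<^sub>R std_normal_density x) \<longlongrightarrow> std_normal_density x) at_top"
    proof (rule AE_I2)
      fix x :: real
      have "\<forall>\<^sub>F R in at_top. indicator {-R..R} x *\<^sub>R std_normal_density x = std_normal_density x"
        using eventually_ge_at_top[of "\<bar>x\<bar>"] by eventually_elim (auto simp: indicator_def)
      then show "((\<lambda>R. indicator {-R..R} x *\<^sub>R std_normal_density x) \<longlongrightarrow> std_normal_density x) at_top"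
        by (rule tendsto_eventually)
    qed
  qed (auto simp: indicator_def)
  then have "((\<lambda>R. sqrt (2 * pi) * (LINT x:{-R..R}|lborel. std_normal_density x)) \<longlongrightarrow> sqrt (2 * pi) * 1) at_top"
    by (intro tendsto_mult_left) simp
  then show ?thesis by (simp add: eq [abs_def])
qed

lemma gauss_mass_pos:
  assumes "R > 0"
  shows "gauss_mass R > 0"
proof -
  have "integral {-R..R} (\<lambda>x::real. exp (- R\<^sup>2 / 2)) \<le> gauss_mass R"
    unfolding gauss_mass_def
  proof (rule integral_le)
    fix x :: real assume "x \<in> {-R..R}"
    then have "x\<^sup>2 \<le> R\<^sup>2" using abs_le_square_iff[of x R] assms by auto
    then show "exp (- R\<^sup>2 / 2) \<le> exp (- x\<^sup>2 / 2)" by simp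
  qed (auto intro!: integrable_continuous_interval continuous_intros)
  moreover have "integral {-R..R} (\<lambda>x::real. exp (- R\<^sup>2 / 2)) = 2 * R * exp (- R\<^sup>2 / 2)"
    using assms by simp
  ultimately show ?thesis using assms by (smt (verit) exp_gt_zero mult_pos_pos)
qed

lemma has_integral_gaussian_window:
  fixes c \<delta> S :: real
  assumes "S > 0"
  shows "((\<lambda>u. exp (- (S * (u - c))\<^sup>2 / 2)) has_integral gauss_mass (\<delta> * S) / S) {c - \<delta>..c + \<delta>}"
proof -
  have "((\<lambda>x::real. exp (- x\<^sup>2 / 2)) has_integral gauss_mass (\<delta> * S)) (cbox (-(\<delta> * S)) (\<delta> * S))"
    unfolding gauss_mass_def
    by (auto intro!: integrable_integral integrable_continuous_interval continuous_intros)
  from has_integral_affinity'[OF this assms, of "- (S * c)"]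
  have "((\<lambda>u. exp (- (S * u + - (S * c))\<^sup>2 / 2)) has_integral inverse S * gauss_mass (\<delta> * S))
          {inverse S * (S * c - \<delta> * S)..inverse S * (\<delta> * S + S * c)}"
    by simp
  moreover have "{inverse S * (S * c - \<delta> * S)..inverse S * (\<delta> * S + S * c)} = {c - \<delta>..c + \<delta>}"
    "inverse S * gauss_mass (\<delta> * S) = gauss_mass (\<delta> * S) / S"
    "(\<lambda>u. exp (- (S * u + - (S * c))\<^sup>2 / 2)) = (\<lambda>u. exp (- (S * (u - c))\<^sup>2 / 2))"
    using assms by (simp_all add: field_simps)
  ultimately show ?thesis by simp
qed
lemma le_integral_div_gauss_mass:
  fixes w :: "real \<Rightarrow> real" and lo hi c \<delta> S W :: real
  assumes cont: "continuous_on {lo..hi} w"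
    and nonneg: "\<And>u. u \<in> {lo..hi} \<Longrightarrow> 0 \<le> w u"
    and peak: "\<And>u. u \<in> {lo..hi} \<Longrightarrow> w u \<le> W"
    and minorant: "\<And>u. u \<in> {c - \<delta>..c + \<delta>} \<Longrightarrow> W * exp (- (S * (u - c))\<^sup>2 / 2) \<le> w u"
    and window: "{c - \<delta>..c + \<delta>} \<subseteq> {lo..hi}"
    and "\<delta> > 0" "S > 0" "W > 0" "u \<in> {lo..hi}"
  shows "w u / integral {lo..hi} w \<le> S / gauss_mass (\<delta> * S)"
proof -
  have G: "gauss_mass (\<delta> * S) > 0"
    using assms by (simp add: gauss_mass_pos)
  have window_int: "((\<lambda>u. W * exp (- (S * (u - c))\<^sup>2 / 2)) has_integral W * (gauss_mass (\<delta> * S) / S))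
      {c - \<delta>..c + \<delta>}"
    using has_integral_mult_right[OF has_integral_gaussian_window[OF \<open>S > 0\<close>]] .
  have "W * (gauss_mass (\<delta> * S) / S) \<le> integral {c - \<delta>..c + \<delta>} w"
  proof (rule has_integral_le[OF window_int])
    show "(w has_integral integral {c - \<delta>..c + \<delta>} w) {c - \<delta>..c + \<delta>}"
      using window by (intro integrable_integral integrable_continuous_interval
          continuous_on_subset[OF cont]) auto
  qed (rule minorant)
  also have "\<dots> \<le> integral {lo..hi} w"
    using window nonneg by (intro integral_subset_le integrable_continuous_interval
        continuous_on_subset[OF cont]) auto
  finally have F: "W * (gauss_mass (\<delta> * S) / S) \<le> integral {lo..hi} w" .
  moreover have "0 < W * (gauss_mass (\<delta> * S) / S)"
    using G assms by simp
  ultimately have "w u / integral {lo..hi} w \<le> W / (W * (gauss_mass (\<delta> * S) / S))"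
    using peak[OF \<open>u \<in> {lo..hi}\<close>] nonneg[OF \<open>u \<in> {lo..hi}\<close>]
    by (intro frac_le) auto
  also have "\<dots> = S / gauss_mass (\<delta> * S)"
    using G assms by simp
  finally show ?thesis .
qed

definition psi :: "real \<Rightarrow> real \<Rightarrow> real \<Rightarrow> real" where
  "psi r a u = r * ln (1 - u\<^sup>2) / 2 + a * u"

definition crit_point :: "real \<Rightarrow> real \<Rightarrow> real" where
  "crit_point r a = (sqrt (r\<^sup>2 + 4 * a\<^sup>2) - r) / (2 * a)"

definition curvature_bound :: "real \<Rightarrow> real \<Rightarrow> real" where
  "curvature_bound c \<delta> = (1 + 3 * c\<^sup>2 + 2 * \<delta>) / ((1 - c\<^sup>2) * (1 - (c + \<delta>)\<^sup>2))"

lemma curvature_bound_pos: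
  assumes "0 \<le> c" "\<delta> > 0" "c + \<delta> < 1"
  shows "curvature_bound c \<delta> > 0"
proof -
  have "c\<^sup>2 < 1" "(c + \<delta>)\<^sup>2 < 1" using assms by (simp_all add: power_less_one_iff)
  moreover have "0 < 1 + 3 * c\<^sup>2 + 2 * \<delta>" using zero_le_power2[of c] assms by linarith
  ultimately show ?thesis unfolding curvature_bound_def by simp
qed

lemma crit_point_pos:
  assumes "a > 0" "r \<ge> 0"
  shows "0 < crit_point r a"
proof -
  have "r = sqrt (r\<^sup>2)" using assms by simp
  also have "\<dots> < sqrt (r\<^sup>2 + 4 * a\<^sup>2)" using assms by (intro real_sqrt_less_mono) simp
  finally show ?thesis unfolding crit_point_def using assms by simp
qed

lemma crit_point_less_one:
  assumes "a > 0" "r > 0"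
  shows "crit_point r a < 1"
proof -
  have "sqrt (r\<^sup>2 + 4 * a\<^sup>2) < sqrt ((r + 2 * a)\<^sup>2)"
    using assms by (intro real_sqrt_less_mono) (simp add: power2_eq_square algebra_simps)
  also have "\<dots> = r + 2 * a" using assms by simp
  finally show ?thesis unfolding crit_point_def using assms by (simp add: field_simps)
qed

lemma crit_point_equation:
  assumes "a > 0"
  shows "a * (1 - (crit_point r a)\<^sup>2) = r * crit_point r a"
  using assms unfolding crit_point_def
  by (simp add: field_simps power2_eq_square)

lemma psi_le_at_critical:
  assumes "r \<ge> 0" "c\<^sup>2 < 1" "u\<^sup>2 < 1" "a * (1 - c\<^sup>2) = r * c"
  shows "psi r a u \<le> psi r a c"
proof -
  have pos: "1 - c\<^sup>2 > 0" "1 - u\<^sup>2 > 0" using assms by auto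
  have "ln (1 - u\<^sup>2) - ln (1 - c\<^sup>2) \<le> (1 - u\<^sup>2) / (1 - c\<^sup>2) - 1"
    using ln_le_minus_one[of "(1 - u\<^sup>2) / (1 - c\<^sup>2)"] pos by (simp add: ln_div)
  then have "r * (ln (1 - u\<^sup>2) - ln (1 - c\<^sup>2)) \<le> r * ((1 - u\<^sup>2) / (1 - c\<^sup>2) - 1)"
    using assms(1) by (rule mult_left_mono)
  moreover have a: "a = r * c / (1 - c\<^sup>2)"
    using assms(4) pos by (simp add: field_simps)
  then have "r * ((1 - u\<^sup>2) / (1 - c\<^sup>2) - 1) / 2 + a * (u - c) = - r * (u - c)\<^sup>2 / (2 * (1 - c\<^sup>2))"
    unfolding a using pos by (simp add: divide_simps) (simp add: power2_eq_square algebra_simps)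
  moreover have "- r * (u - c)\<^sup>2 / (2 * (1 - c\<^sup>2)) \<le> 0"
    using pos assms(1) by (simp add: divide_nonpos_pos)
  ultimately show ?thesis unfolding psi_def right_diff_distrib by argo
qed

lemma psi_ge_at_critical:
  assumes "r \<ge> 0" "c\<^sup>2 < 1" "u\<^sup>2 < 1" "a * (1 - c\<^sup>2) = r * c"
  shows "psi r a u \<ge> psi r a c - r * (u - c)\<^sup>2 * (1 + c\<^sup>2 + 2 * c * u) / (2 * (1 - c\<^sup>2) * (1 - u\<^sup>2))"
proof -
  have pos: "1 - c\<^sup>2 > 0" "1 - u\<^sup>2 > 0" using assms by auto
  have "1 - (1 - c\<^sup>2) / (1 - u\<^sup>2) \<le> ln (1 - u\<^sup>2) - ln (1 - c\<^sup>2)"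
    using ln_le_minus_one[of "(1 - c\<^sup>2) / (1 - u\<^sup>2)"] pos by (simp add: ln_div)
  then have "r * (1 - (1 - c\<^sup>2) / (1 - u\<^sup>2)) \<le> r * (ln (1 - u\<^sup>2) - ln (1 - c\<^sup>2))"
    using assms(1) by (rule mult_left_mono)
  moreover have "r * (1 - (1 - c\<^sup>2) / (1 - u\<^sup>2)) / 2 + a * (u - c)
      = - r * (u - c)\<^sup>2 * (1 + c\<^sup>2 + 2 * c * u) / (2 * (1 - c\<^sup>2) * (1 - u\<^sup>2))"
  proof -
    have a: "a = r * c / (1 - c\<^sup>2)"
      using assms(4) pos by (simp add: field_simps)
    show ?thesis unfolding a using pos by (simp add: field_simps power2_eq_square)
  qed
  ultimately show ?thesis unfolding psi_def right_diff_distrib by argo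
qed

lemma psi_ge_window:
  assumes "r \<ge> 0" "0 \<le> c" "\<delta> > 0" "c + \<delta> < 1" "a * (1 - c\<^sup>2) = r * c"
    and u: "u \<in> {c - \<delta>..c + \<delta>}"
  shows "psi r a u \<ge> psi r a c - r * curvature_bound c \<delta> * (u - c)\<^sup>2 / 2"
proof -
  have "\<bar>u\<bar> \<le> c + \<delta>" using u assms by auto
  then have u2: "u\<^sup>2 \<le> (c + \<delta>)\<^sup>2" using abs_le_square_iff[of u "c + \<delta>"] assms by simp
  have cd2: "(c + \<delta>)\<^sup>2 < 1" using assms by (simp add: power_less_one_iff abs_less_iff)
  have c2: "c\<^sup>2 < 1" using assms by (simp add: power_less_one_iff)
  have "c * u \<le> c * (c + \<delta>)" using u assms by (intro mult_left_mono) auto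
  also have "\<dots> \<le> c\<^sup>2 + \<delta>" using assms by (simp add: power2_eq_square algebra_simps)
  finally have num: "1 + c\<^sup>2 + 2 * c * u \<le> 1 + 3 * c\<^sup>2 + 2 * \<delta>" by simp
  have "(1 + c\<^sup>2 + 2 * c * u) / ((1 - c\<^sup>2) * (1 - u\<^sup>2))
      \<le> (1 + 3 * c\<^sup>2 + 2 * \<delta>) / ((1 - c\<^sup>2) * (1 - u\<^sup>2))"
    using num c2 u2 cd2 by (intro divide_right_mono) auto
  also have "\<dots> \<le> curvature_bound c \<delta>"
    unfolding curvature_bound_def using c2 u2 cd2 assms
    by (intro divide_left_mono mult_left_mono mult_pos_pos) (auto intro: add_pos_nonneg)
  finally have "r * (u - c)\<^sup>2 * ((1 + c\<^sup>2 + 2 * c * u) / ((1 - c\<^sup>2) * (1 - u\<^sup>2))) / 2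
      \<le> r * (u - c)\<^sup>2 * curvature_bound c \<delta> / 2"
    using assms by (intro divide_right_mono mult_left_mono) auto
  moreover have "psi r a u \<ge> psi r a c - r * (u - c)\<^sup>2 * ((1 + c\<^sup>2 + 2 * c * u) / ((1 - c\<^sup>2) * (1 - u\<^sup>2))) / 2"
    using psi_ge_at_critical[of r c u a] assms c2 u2 cd2 by (simp add: field_simps)
  moreover have "r * (u - c)\<^sup>2 * curvature_bound c \<delta> = r * curvature_bound c \<delta> * (u - c)\<^sup>2"
    by (simp add: mult_ac)
  ultimately show ?thesis by linarith
qed

lemma wU_eq_power:
  assumes "n \<ge> 3"
  shows "wU P s n u = sqrt (1 - u\<^sup>2) ^ (n - 3) * exp (real n * sqrt (P * s) * u)"
proof -
  have "int n - 3 = int (n - 3)" using assms by simp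
  then show ?thesis unfolding wU_def by (metis power_int_of_nat)
qed

lemma continuous_on_wU:
  assumes "n \<ge> 3"
  shows "continuous_on A (wU P s n)"
  using assms by (simp add: wU_eq_power continuous_intros)

lemma wU_nonneg:
  assumes "n \<ge> 3" "u \<in> {-1..1}"
  shows "0 \<le> wU P s n u"
proof -
  have "u\<^sup>2 \<le> 1" using assms by (auto simp: abs_square_le_1)
  then show ?thesis using assms by (simp add: wU_eq_power)
qed

lemma wU_eq_exp_psi:
  assumes "n \<ge> 3" "u\<^sup>2 < 1"
  shows "wU P s n u = exp (real n * psi ((real n - 3) / real n) (sqrt (P * s)) u)"
proof -
  have "sqrt (1 - u\<^sup>2) ^ (n - 3) = exp (ln (sqrt (1 - u\<^sup>2) ^ (n - 3)))"
    using assms by simp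
  also have "\<dots> = exp (real (n - 3) * (ln (1 - u\<^sup>2) / 2))"
    using assms by (simp add: ln_realpow ln_sqrt)
  finally have "sqrt (1 - u\<^sup>2) ^ (n - 3) = exp (real (n - 3) * (ln (1 - u\<^sup>2) / 2))" .
  moreover have "real n * psi ((real n - 3) / real n) (sqrt (P * s)) u
      = real (n - 3) * (ln (1 - u\<^sup>2) / 2) + real n * sqrt (P * s) * u"
    using assms by (simp add: psi_def of_nat_diff field_simps)
  ultimately show ?thesis using assms by (simp add: wU_eq_power exp_add)
qed

lemma wU_boundary:
  assumes "n \<ge> 4" "u\<^sup>2 = 1"
  shows "wU P s n u = 0"
  using assms by (simp add: wU_eq_power)

lemma wU_le_peak:
  fixes P s :: real
  assumes "n \<ge> 4"
  defines "r \<equiv> (real n - 3) / real n" and "a \<equiv> sqrt (P * s)"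
  assumes "a * (1 - c\<^sup>2) = r * c" "c\<^sup>2 < 1" "u \<in> {-1..1}"
  shows "wU P s n u \<le> exp (real n * psi r a c)"
proof (cases "u\<^sup>2 < 1")
  case True
  moreover have "r \<ge> 0" using assms by (simp add: r_def)
  ultimately show ?thesis
    using psi_le_at_critical[of r c u a] assms by (simp add: wU_eq_exp_psi)
next
  case False
  with assms have "u\<^sup>2 = 1" by (auto simp: abs_square_less_1 abs_square_eq_1)
  then show ?thesis using wU_boundary assms by (simp add: less_imp_le)
qed

lemma fU_le_gauss_mass_bound:
  assumes "P > 0" "s > 0" "n \<ge> 4" "\<delta> > 0"
  defines "c \<equiv> crit_point ((real n - 3) / real n) (sqrt (P * s))"
  defines "S \<equiv> sqrt ((real n - 3) * curvature_bound c \<delta>)"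
  assumes "c + \<delta> < 1" "u \<in> {-1..1}"
  shows "fU P s n u \<le> S / gauss_mass (\<delta> * S)"
proof -
  define r where "r = (real n - 3) / real n"
  define a where "a = sqrt (P * s)"
  define W where "W = exp (real n * psi r a c)"
  have a: "a > 0" and r: "r > 0" and nr: "real n * r = real n - 3"
    using assms by (auto simp: a_def r_def)
  have c: "0 < c" "c < 1" "a * (1 - c\<^sup>2) = r * c"
    using crit_point_pos[OF a less_imp_le[OF r]] crit_point_less_one[OF a r] crit_point_equation[OF a]
    unfolding c_def r_def a_def by auto
  have c2: "c\<^sup>2 < 1" using c by (simp add: power_less_one_iff)
  have K: "curvature_bound c \<delta> > 0" using curvature_bound_pos c assms by auto
  have S: "S > 0" "S\<^sup>2 = (real n - 3) * curvature_bound c \<delta>"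
    using K assms by (auto simp: S_def)
  have "wU P s n u / integral {-1..1} (wU P s n) \<le> S / gauss_mass (\<delta> * S)"
  proof (rule le_integral_div_gauss_mass)
    fix v :: real assume "v \<in> {-1..1}"
    then show "wU P s n v \<le> W"
      using wU_le_peak[OF \<open>n \<ge> 4\<close>, of P s c v] c2 c(3) by (simp add: W_def r_def a_def)
  next
    fix v :: real assume v: "v \<in> {c - \<delta>..c + \<delta>}"
    have "\<bar>v\<bar> < 1" using v c assms by auto
    then have v2: "v\<^sup>2 < 1" by (simp add: abs_square_less_1)
    have "psi r a c - r * curvature_bound c \<delta> * (v - c)\<^sup>2 / 2 \<le> psi r a v"
      using psi_ge_window[OF less_imp_le[OF r] less_imp_le[OF c(1)] \<open>\<delta> > 0\<close> _ c(3) v] assms by simp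
    then have "real n * psi r a c - real n * (r * curvature_bound c \<delta> * (v - c)\<^sup>2 / 2)
        \<le> real n * psi r a v"
      by (metis mult_left_mono of_nat_0_le_iff right_diff_distrib)
    moreover have "real n * (r * curvature_bound c \<delta> * (v - c)\<^sup>2 / 2) = (S * (v - c))\<^sup>2 / 2"
      by (simp add: power_mult_distrib S(2) flip: nr)
    ultimately have "real n * psi r a c - (S * (v - c))\<^sup>2 / 2 \<le> real n * psi r a v"
      by simp
    then show "W * exp (- (S * (v - c))\<^sup>2 / 2) \<le> wU P s n v"
      using assms v2 by (simp add: W_def wU_eq_exp_psi r_def a_def flip: exp_add)
  qed (use assms c S in \<open>auto simp: W_def wU_nonneg continuous_on_wU\<close>)
  then show ?thesis using assms by (simp add: fU_def FU_def)
qed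

lemma curvature_bound_at_crit_point:
  assumes "a > 0"
  defines "t \<equiv> sqrt (1 + 4 * a\<^sup>2)"
  shows "curvature_bound (crit_point 1 a) 0 = (2 * t - 1) * (t + 1) / 2"
proof -
  have t2: "t\<^sup>2 = 1 + 4 * a\<^sup>2" by (simp add: t_def)
  have t: "t > 1" "4 * a\<^sup>2 = (t - 1) * (t + 1)"
    using assms by (simp add: t_def) (use t2 in \<open>simp add: algebra_simps power2_eq_square\<close>)
  have "(crit_point 1 a)\<^sup>2 = (t - 1)\<^sup>2 / (4 * a\<^sup>2)"
    by (simp add: crit_point_def t_def power_divide power_mult_distrib)
  also have "\<dots> = (t - 1)\<^sup>2 / ((t - 1) * (t + 1))"
    by (simp only: t(2))
  also have "\<dots> = (t - 1) / (t + 1)"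
    using t by (simp add: power2_eq_square)
  finally have c2: "(crit_point 1 a)\<^sup>2 = (t - 1) / (t + 1)" .
  show ?thesis
    unfolding curvature_bound_def mult_zero_right add_0_right c2 using t by (simp add: field_simps)
qed

lemma LPs_eq:
  assumes "P > 0" "s > 0"
  defines "t \<equiv> sqrt (1 + 4 * P * s)"
  shows "LPs P s = (t + 1)\<^sup>2 * sqrt t / (4 * sqrt (2 * pi))"
proof -
  have t: "t > 1" "1 + 4 * P * s = t\<^sup>2" using assms by (auto simp: t_def)
  have "1 + 4 * P * s - t = (t - 1) * t" "(t - 1) ^ 5 = (t - 1) * ((t - 1)\<^sup>2)\<^sup>2"
    unfolding t(2) by (simp_all add: power2_eq_square algebra_simps eval_nat_numeral)
  then have "(1 + 4 * P * s - t) / (t - 1) ^ 5 = t / ((t - 1)\<^sup>2)\<^sup>2"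
    using t by simp
  then have A: "sqrt ((1 + 4 * P * s - t) / (t - 1) ^ 5) = sqrt t / (t - 1)\<^sup>2"
    by (simp only: real_sqrt_divide real_sqrt_abs abs_power2)
  have B: "(2 * P * s)\<^sup>2 = (t - 1)\<^sup>2 * (t + 1)\<^sup>2 / 4"
  proof -
    have "2 * P * s = (t - 1) * (t + 1) / 2"
      using t(2) by (simp add: power2_eq_square algebra_simps)
    then have "(2 * P * s)\<^sup>2 = ((t - 1) * (t + 1) / 2)\<^sup>2" by (simp only:)
    then show ?thesis by (simp add: power_mult_distrib power_divide)
  qed
  show ?thesis
    unfolding LPs_def t_def[symmetric] A B using t by (simp add: field_simps)
qed

lemma curvature_limit_le_LPs:
  assumes "P > 0" "s > 0"
  shows "sqrt (curvature_bound (crit_point 1 (sqrt (P * s))) 0) / sqrt (2 * pi) \<le> LPs P s"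
proof -
  define t where "t = sqrt (1 + 4 * P * s)"
  have t: "t > 1" using assms by (simp add: t_def)
  have "(t + 1) ^ 3 * t - 8 * (2 * t - 1)
      = (t - 1) * (4 + 18 * (t - 1) + 7 * (t - 1)\<^sup>2 + (t - 1) ^ 3)"
    by (simp add: algebra_simps eval_nat_numeral)
  also have "\<dots> \<ge> 0" using t by simp
  finally have "8 * (2 * t - 1) * (t + 1) \<le> (t + 1) ^ 3 * t * (t + 1)"
    using t by (intro mult_right_mono) auto
  moreover have "((t + 1)\<^sup>2 * sqrt t / 4)\<^sup>2 = (t + 1) ^ 4 * t / 16"
    using t by (simp add: power_mult_distrib power_divide)
  ultimately have sq: "(2 * t - 1) * (t + 1) / 2 \<le> ((t + 1)\<^sup>2 * sqrt t / 4)\<^sup>2"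
    by (simp add: eval_nat_numeral algebra_simps)
  have le: "sqrt ((2 * t - 1) * (t + 1) / 2) \<le> (t + 1)\<^sup>2 * sqrt t / 4"
    using real_le_lsqrt[OF _ sq] t by simp
  have "curvature_bound (crit_point 1 (sqrt (P * s))) 0 = (2 * t - 1) * (t + 1) / 2"
    using curvature_bound_at_crit_point[of "sqrt (P * s)"] assms by (simp add: t_def mult.assoc)
  then have "sqrt (curvature_bound (crit_point 1 (sqrt (P * s))) 0) / sqrt (2 * pi)
      = sqrt ((2 * t - 1) * (t + 1) / 2) / sqrt (2 * pi)"
    by simp
  also have "\<dots> \<le> ((t + 1)\<^sup>2 * sqrt t / 4) / sqrt (2 * pi)"
    by (rule divide_right_mono[OF le]) simp
  also have "\<dots> = LPs P s"
    by (simp add: LPs_eq[OF assms] t_def)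
  finally show ?thesis .
qed

lemma gauss_mass_bound_asymptotics:
  assumes "a > 0"
    and c_def: "c = (\<lambda>n. crit_point ((real n - 3) / real n) a)"
    and \<delta>_def: "\<delta> = (\<lambda>n::nat. 1 / sqrt (sqrt (real n)))"
    and S_def: "S = (\<lambda>n. sqrt ((real n - 3) * curvature_bound (c n) (\<delta> n)))"
  shows "\<forall>\<^sub>F n in sequentially. c n + \<delta> n < 1"
    and "(\<lambda>n. S n / sqrt (real n) / gauss_mass (\<delta> n * S n))
           \<longlonglongrightarrow> sqrt (curvature_bound (crit_point 1 a) 0) / sqrt (2 * pi)"
proof -
  define c_lim where "c_lim = crit_point 1 a"
  have c_lim: "0 < c_lim" "c_lim < 1"
    using crit_point_pos[of a 1] crit_point_less_one[of a 1] assms by (auto simp: c_lim_def)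
  have r: "(\<lambda>n. (real n - 3) / real n) \<longlonglongrightarrow> 1" by real_asymp
  have \<delta>: "\<delta> \<longlonglongrightarrow> 0" unfolding \<delta>_def by real_asymp
  have c: "c \<longlonglongrightarrow> c_lim"
    unfolding c_def c_lim_def crit_point_def using assms by (intro tendsto_intros r) auto
  have "(\<lambda>n. c n + \<delta> n) \<longlonglongrightarrow> c_lim + 0" by (intro tendsto_intros c \<delta>)
  then show "\<forall>\<^sub>F n in sequentially. c n + \<delta> n < 1"
    using c_lim by (intro order_tendstoD(2)) auto
  have "c_lim\<^sup>2 < 1" using c_lim by (simp add: power_less_one_iff)
  then have K: "(\<lambda>n. curvature_bound (c n) (\<delta> n)) \<longlonglongrightarrow> curvature_bound c_lim 0"
    unfolding curvature_bound_def by (intro tendsto_intros c \<delta>) auto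
  have K_pos: "curvature_bound c_lim 0 > 0"
    unfolding curvature_bound_def using c_lim by (simp add: power_less_one_iff add_pos_nonneg)
  have "filterlim (\<lambda>n::nat. sqrt ((real n - 3) / sqrt (sqrt (real n)) ^ 2)) at_top sequentially"
    by real_asymp
  then have "filterlim (\<lambda>n. sqrt (curvature_bound (c n) (\<delta> n)) * sqrt ((real n - 3) / sqrt (sqrt (real n)) ^ 2))
      at_top sequentially"
    using K_pos by (intro filterlim_tendsto_pos_mult_at_top[OF tendsto_real_sqrt[OF K]]) auto
  then have "filterlim (\<lambda>n. \<delta> n * S n) at_top sequentially"
    by (simp add: \<delta>_def S_def real_sqrt_mult real_sqrt_divide mult.commute)
  then have G: "(\<lambda>n. gauss_mass (\<delta> n * S n)) \<longlonglongrightarrow> sqrt (2 * pi)"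
    by (rule filterlim_compose[OF gauss_mass_tendsto])
  have "(\<lambda>n. sqrt ((real n - 3) / real n * curvature_bound (c n) (\<delta> n))) \<longlonglongrightarrow> sqrt (1 * curvature_bound c_lim 0)"
    by (intro tendsto_intros r K)
  moreover have "S n / sqrt (real n) = sqrt ((real n - 3) / real n * curvature_bound (c n) (\<delta> n))" for n
    by (simp add: S_def real_sqrt_mult real_sqrt_divide)
  ultimately show "(\<lambda>n. S n / sqrt (real n) / gauss_mass (\<delta> n * S n))
      \<longlonglongrightarrow> sqrt (curvature_bound (crit_point 1 a) 0) / sqrt (2 * pi)"
    unfolding c_lim_def by (intro tendsto_intros G) auto
qed

theorem lemma1:
  fixes P s :: real
  assumes "P > 0" and "s > 0"
  shows "limsup (\<lambda>n::nat. ereal (1 / sqrt (real n)) * (SUP u\<in>{-1..1::real}. ereal (fU P s n u)))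
           \<le> ereal (LPs P s)"
proof -
  define a where "a = sqrt (P * s)"
  define c where "c = (\<lambda>n. crit_point ((real n - 3) / real n) a)"
  define \<delta> where "\<delta> = (\<lambda>n::nat. 1 / sqrt (sqrt (real n)))"
  define S where "S = (\<lambda>n. sqrt ((real n - 3) * curvature_bound (c n) (\<delta> n)))"
  have "a > 0" using assms by (simp add: a_def)
  note asymp = gauss_mass_bound_asymptotics[OF this c_def \<delta>_def S_def]
  have "\<forall>\<^sub>F n in sequentially. ereal (1 / sqrt (real n)) * (SUP u\<in>{-1..1::real}. ereal (fU P s n u))
      \<le> ereal (S n / sqrt (real n) / gauss_mass (\<delta> n * S n))"
    using asymp(1) eventually_ge_at_top[of 4]
  proof eventually_elim
    case (elim n)
    have "\<delta> n > 0" "c n + \<delta> n < 1" using elim by (simp_all add: \<delta>_def c_def)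
    then have "fU P s n u \<le> S n / gauss_mass (\<delta> n * S n)" if "u \<in> {-1..1}" for u
      using fU_le_gauss_mass_bound[OF assms, of n "\<delta> n" u] elim that by (simp add: a_def c_def S_def)
    then have "(SUP u\<in>{-1..1::real}. ereal (fU P s n u)) \<le> ereal (S n / gauss_mass (\<delta> n * S n))"
      by (intro SUP_least) simp
    then have "ereal (1 / sqrt (real n)) * (SUP u\<in>{-1..1::real}. ereal (fU P s n u))
        \<le> ereal (1 / sqrt (real n)) * ereal (S n / gauss_mass (\<delta> n * S n))"
      by (rule ereal_mult_left_mono) simp
    then show ?case by simp
  qed
  then have "limsup (\<lambda>n::nat. ereal (1 / sqrt (real n)) * (SUP u\<in>{-1..1::real}. ereal (fU P s n u)))
      \<le> limsup (\<lambda>n. ereal (S n / sqrt (real n) / gauss_mass (\<delta> n * S n)))"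
    by (rule Limsup_mono)
  also have "\<dots> = ereal (sqrt (curvature_bound (crit_point 1 a) 0) / sqrt (2 * pi))"
    using asymp(2) by (intro lim_imp_Limsup) auto
  also have "\<dots> \<le> ereal (LPs P s)"
    using curvature_limit_le_LPs[OF assms] by (simp add: a_def)
  finally show ?thesis .
qed

end
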